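(* Let $d\ge1$, $\alpha\in(0,2)$, and let $K:\mathbb{R}^d\times\mathbb{R}^d\to(0,\infty)$ be positive, $1$-periodic and $C^2$ in $x$, symmetric in $y$, and satisfy, for some $C_K>0$ and for $\mathcal K\in\{K,|D_xK|,|D^2_xK|\}$, $C_K^{-1}\le\mathcal K(x,y)|y|^{d+\alpha}\le C_K$ for all $x,y$. Let $L^\alpha[u](x)=\int_{\mathbb{R}^d}(u(x)-u(x+y))K(x,y)\,dy$. For a real number $\lambda$ let $$h(x,t)=\frac{1}{1+e^{-\lambda t}|x|^{d+\alpha}}.$$ Then there is a constant $D>0$ depending only on $d$ (and $\alpha$) and $K$ such that for all $(x,t)$, $$\big|L^\alpha[h(\cdot,t)](x)\big|\le\frac{De^{-\alpha\lambda t/(d+\alpha)}}{1+e^{-\lambda t}|x|^{d+\alpha}}.$$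
   Context: $L^\alpha$ acts in the $x$ variable, with $t$ fixed. *)

theory Defs
  imports "HOL-Analysis.Analysis"
begin

definition Lalpha :: "('a::euclidean_space \<Rightarrow> 'a \<Rightarrow> real) \<Rightarrow> ('a \<Rightarrow> real) \<Rightarrow> 'a \<Rightarrow> real" where
  "Lalpha K u x = Lim (at_right 0)
     (\<lambda>\<epsilon>. LINT y|lborel. indicator {y. \<epsilon> < norm y} y * ((u x - u (x + y)) * K x y))"

end

theory Submission
  imports Defs
begin

text \<open>
  Write p = d + \<alpha> and g(u) = 1 / (1 + |u|^p); then h(\<cdot>, t) = g(a \<cdot>) with a = e^(-\<lambda>t/p).
  Symmetrising the principal value, L^\<alpha> u (x) is the integral of
  (u(x) - (u(x+y) + u(x-y))/2) K(x,y) dy, so the kernel bound K(x,y) \<le> C_K |y|^-p and the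
  substitution w = a y reduce the claim to
  \<integral> |g(z) - (g(z+w) + g(z-w))/2| |w|^-p dw \<le> C g(z),
  the rescaling producing the factor a^p a^-d = a^\<alpha>. For |w| \<le> 1 the second difference is
  O(|w|^\<beta> g(z)), with \<beta> = 1 when \<alpha> < 1 and \<beta> = 2 otherwise (then p \<ge> 2 and s \<mapsto> s^(p/2) is
  C^2); since \<beta> > \<alpha>, the singularity |w|^(\<beta>-p) is integrable at 0. For |w| \<ge> 1 it is
  O(g(z) (|w|^-p + g(z+w) + g(z-w))), and each term is integrable uniformly in z. Both
  integrability facts follow by dominating with products of one-dimensional weights of the
  coordinates of w.
\<close>

section \<open>Elementary inequalities\<close>

lemma powr_diff_le_mult_powr:
  fixes a b p :: real
  assumes "0 \<le> b" "b \<le> a" "1 \<le> p"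
  shows "a powr p - b powr p \<le> p * a powr (p - 1) * (a - b)"
proof (cases "b = a")
  case False
  then have ba: "b < a" using assms by simp
  have "continuous_on {b..a} (\<lambda>x. x powr p)"
    using assms by (intro continuous_on_powr' continuous_intros) auto
  moreover have "(\<lambda>x. x powr p) differentiable (at x)" if "b < x" for x
    using that assms has_real_derivative_powr[of x p] by (auto simp: real_differentiable_def)
  ultimately obtain l z where z: "b < z" "z < a" "((\<lambda>x. x powr p) has_real_derivative l) (at z)"
      "a powr p - b powr p = (a - b) * l"
    using MVT[OF ba] by blast
  have "l = p * z powr (p - 1)"
    using DERIV_unique[OF z(3) has_real_derivative_powr] z(1) assms by auto
  moreover have "z powr (p - 1) \<le> a powr (p - 1)"
    using z assms by (intro powr_mono2) auto
  then have "(a - b) * (p * z powr (p - 1)) \<le> (a - b) * (p * a powr (p - 1))"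
    using ba assms by (intro mult_left_mono) auto
  ultimately show ?thesis
    using z(4) by (simp add: algebra_simps)
qed simp

lemma abs_powr_diff_le:
  fixes a b p :: real
  assumes "0 \<le> a" "0 \<le> b" "1 \<le> p"
  shows "\<bar>a powr p - b powr p\<bar> \<le> p * max a b powr (p - 1) * \<bar>a - b\<bar>"
proof (cases "b \<le> a")
  case True
  then have "b powr p \<le> a powr p" using assms by (intro powr_mono2) auto
  with powr_diff_le_mult_powr[of b a p] True assms show ?thesis by (simp add: max_def)
next
  case False
  then have "a powr p \<le> b powr p" using assms by (intro powr_mono2) auto
  with powr_diff_le_mult_powr[of a b p] False assms show ?thesis by (simp add: max_def)
qed

lemma powr_add_le:
  fixes a b p :: real
  assumes "0 \<le> a" "0 \<le> b" "0 \<le> p"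
  shows "(a + b) powr p \<le> 2 powr p * (a powr p + b powr p)"
proof -
  have "(a + b) powr p \<le> (2 * max a b) powr p" using assms by (intro powr_mono2) auto
  also have "\<dots> = 2 powr p * max a b powr p" using assms by (simp add: powr_mult)
  also have "max a b powr p \<le> a powr p + b powr p" by (auto simp: max_def)
  finally show ?thesis by (simp add: mult_left_mono)
qed

lemma powr_le_within_factor_two:
  fixes c t r :: real
  assumes "0 < c" "c / 2 \<le> t" "t \<le> 2 * c"
  shows "t powr r \<le> (2 powr r + 2 powr (- r)) * c powr r"
proof (cases "0 \<le> r")
  case True
  have "t powr r \<le> (2 * c) powr r" using assms True by (intro powr_mono2) auto
  also have "\<dots> = 2 powr r * c powr r" using assms by (simp add: powr_mult)
  finally show ?thesis by (simp add: distrib_right add_increasing2)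
next
  case False
  have "t powr r \<le> (c / 2) powr r" using assms False by (intro powr_mono2') auto
  also have "\<dots> = 2 powr (- r) * c powr r" using assms by (simp add: powr_divide powr_minus_divide)
  finally show ?thesis by (simp add: distrib_right add_increasing)
qed

lemma powr_taylor2:
  fixes m c e :: real
  assumes "0 < c" "\<bar>e\<bar> \<le> c / 2" "e \<noteq> 0"
  obtains t where "c / 2 \<le> t" "t \<le> 2 * c"
    "(c + e) powr m = c powr m + m * c powr (m - 1) * e + m * (m - 1) * t powr (m - 2) / 2 * e\<^sup>2"
proof -
  define diff where "diff k = (if k = 0 then (\<lambda>t::real. t powr m)
     else if k = 1 then (\<lambda>t. m * t powr (m - 1)) else (\<lambda>t. m * (m - 1) * t powr (m - 2)))" for k :: nat
  have "DERIV (diff k) t :> diff (Suc k) t" if "k < 2" "c / 2 \<le> t" "t \<le> 2 * c" for k t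
  proof -
    have "0 < t" using that assms by auto
    with that show ?thesis
      by (cases "k = 0") (auto simp: diff_def has_real_derivative_powr algebra_simps
          intro!: derivative_eq_intros)
  qed
  moreover have "c / 2 \<le> c" "c \<le> 2 * c" "c / 2 \<le> c + e" "c + e \<le> 2 * c" "c + e \<noteq> c"
    using assms by (auto simp: abs_le_iff)
  ultimately obtain t where t: "if c + e < c then c + e < t \<and> t < c else c < t \<and> t < c + e"
      "(c + e) powr m = (\<Sum>k<2. diff k c / fact k * (c + e - c) ^ k) + diff 2 t / fact 2 * (c + e - c)\<^sup>2"
    using Taylor[of 2 diff "\<lambda>t. t powr m" "c / 2" "2 * c" c "c + e"] by (auto simp: diff_def)
  show thesis
  proof
    show "c / 2 \<le> t" "t \<le> 2 * c" using t(1) assms by (auto simp: abs_le_iff split: if_splits)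
    show "(c + e) powr m = c powr m + m * c powr (m - 1) * e + m * (m - 1) * t powr (m - 2) / 2 * e\<^sup>2"
      using t(2) by (simp add: diff_def numeral_2_eq_2)
  qed
qed

lemma powr_second_diff_le_near:
  fixes m c e :: real
  assumes "1 \<le> m" "0 < c" "\<bar>e\<bar> \<le> c / 2"
  shows "\<bar>(c + e) powr m + (c - e) powr m - 2 * c powr m\<bar>
    \<le> m * (m - 1) * (2 powr (m - 2) + 2 powr (2 - m)) * e\<^sup>2 * c powr (m - 2)"
proof (cases "e = 0")
  case False
  define B where "B = 2 powr (m - 2) + 2 powr (2 - m)"
  obtain t1 where t1: "c / 2 \<le> t1" "t1 \<le> 2 * c"
      "(c + e) powr m = c powr m + m * c powr (m - 1) * e + m * (m - 1) * t1 powr (m - 2) / 2 * e\<^sup>2"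
    using powr_taylor2[of c e m] assms False by blast
  obtain t2 where t2: "c / 2 \<le> t2" "t2 \<le> 2 * c"
      "(c + - e) powr m = c powr m + m * c powr (m - 1) * - e + m * (m - 1) * t2 powr (m - 2) / 2 * (- e)\<^sup>2"
    using powr_taylor2[of c "- e" m] assms False by (metis abs_minus neg_equal_0_iff_equal)
  have t_le: "t1 powr (m - 2) \<le> B * c powr (m - 2)" "t2 powr (m - 2) \<le> B * c powr (m - 2)"
    using powr_le_within_factor_two[OF assms(2) t1(1,2), of "m - 2"]
      powr_le_within_factor_two[OF assms(2) t2(1,2), of "m - 2"] by (simp_all add: B_def)
  have "(c + e) powr m + (c - e) powr m - 2 * c powr m
      = m * (m - 1) * ((t1 powr (m - 2) + t2 powr (m - 2)) / 2) * e\<^sup>2"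
    using t1(3) t2(3) by (simp add: algebra_simps add_divide_distrib)
  moreover have "0 \<le> m * (m - 1) * ((t1 powr (m - 2) + t2 powr (m - 2)) / 2) * e\<^sup>2"
    using assms by simp
  ultimately have "\<bar>(c + e) powr m + (c - e) powr m - 2 * c powr m\<bar>
      = m * (m - 1) * ((t1 powr (m - 2) + t2 powr (m - 2)) / 2) * e\<^sup>2"
    by simp
  also have "\<dots> \<le> m * (m - 1) * (B * c powr (m - 2)) * e\<^sup>2"
    using t_le assms
    by (intro mult_right_mono mult_left_mono) auto
  finally show ?thesis by (simp add: B_def algebra_simps)
qed simp

lemma powr_second_diff_le:
  fixes m c e :: real
  assumes "1 \<le> m" "0 < c" "\<bar>e\<bar> \<le> c"
  shows "\<bar>(c + e) powr m + (c - e) powr m - 2 * c powr m\<bar>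
    \<le> (m * (m - 1) * (2 powr (m - 2) + 2 powr (2 - m)) + 16 * 2 powr m) * e\<^sup>2 * c powr (m - 2)"
proof (cases "\<bar>e\<bar> \<le> c / 2")
  case True
  then show ?thesis
    using powr_second_diff_le_near[OF assms(1,2) True] assms
    by (elim order_trans) (simp add: distrib_right)
next
  case False
  have "(c + e) powr m \<le> (2 * c) powr m" "(c - e) powr m \<le> (2 * c) powr m" "c powr m \<le> (2 * c) powr m"
    using assms by (auto intro!: powr_mono2)
  then have "\<bar>(c + e) powr m + (c - e) powr m - 2 * c powr m\<bar> \<le> 4 * (2 * c) powr m"
    unfolding abs_le_iff using powr_ge_zero[of "c + e" m] powr_ge_zero[of "c - e" m] powr_ge_zero[of c m]
    by (intro conjI) linarith+
  also have "(2 * c) powr m = 2 powr m * c powr (m - 2) * c\<^sup>2"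
    using assms by (simp add: powr_mult powr_diff powr_realpow)
  also have "4 * (2 powr m * c powr (m - 2) * c\<^sup>2) \<le> 4 * (2 powr m * c powr (m - 2) * (4 * e\<^sup>2))"
  proof -
    have "c\<^sup>2 \<le> (2 * \<bar>e\<bar>)\<^sup>2" using False assms by (intro power_mono) auto
    then show ?thesis by (intro mult_left_mono) (auto simp: power_mult_distrib)
  qed
  also have "\<dots> = 16 * 2 powr m * e\<^sup>2 * c powr (m - 2)" by simp
  also have "\<dots> \<le> (m * (m - 1) * (2 powr (m - 2) + 2 powr (2 - m)) + 16 * 2 powr m) * e\<^sup>2 * c powr (m - 2)"
    using assms by (intro mult_right_mono) auto
  finally show ?thesis .
qed

lemma powr_half_power2:
  fixes x p :: real
  assumes "0 \<le> x" "0 < x \<or> 0 < p"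
  shows "(x\<^sup>2) powr (p / 2) = x powr p"
proof (cases "x = 0")
  case False
  then have "x\<^sup>2 = x powr 2" using assms by (simp add: powr_realpow)
  then show ?thesis by (simp add: powr_powr)
qed (use assms in auto)

lemma abs_powr_shifted_second_diff_le:
  fixes m K c v e :: real
  assumes "1 \<le> m" "0 \<le> K"
    and K: "\<bar>(c + e) powr m + (c - e) powr m - 2 * c powr m\<bar> \<le> K * e\<^sup>2 * c powr (m - 2)"
    and "0 < c" "0 \<le> v" "v \<le> c" "e\<^sup>2 \<le> 4 * c * v"
  shows "\<bar>(c + e) powr m + (c - e) powr m - 2 * (c - v) powr m\<bar> \<le> (4 * K + 2 * m) * v * c powr (m - 1)"
proof -
  have "K * e\<^sup>2 * c powr (m - 2) \<le> K * (4 * c * v) * c powr (m - 2)"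
    using assms by (intro mult_left_mono mult_right_mono) auto
  also have "\<dots> = 4 * K * v * (c * c powr (m - 2))" by simp
  also have "c * c powr (m - 2) = c powr (m - 1)" using assms by (simp add: powr_mult_base)
  finally have centred: "\<bar>(c + e) powr m + (c - e) powr m - 2 * c powr m\<bar> \<le> 4 * K * v * c powr (m - 1)"
    using K by linarith
  have "\<bar>c powr m - (c - v) powr m\<bar> \<le> m * max c (c - v) powr (m - 1) * \<bar>c - (c - v)\<bar>"
    using assms by (intro abs_powr_diff_le) auto
  also have "max c (c - v) = c" using assms by simp
  finally have shift: "\<bar>c powr m - (c - v) powr m\<bar> \<le> m * v * c powr (m - 1)"
    using assms by (simp add: mult_ac)
  have "\<bar>(c + e) powr m + (c - e) powr m - 2 * (c - v) powr m\<bar>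
      \<le> \<bar>(c + e) powr m + (c - e) powr m - 2 * c powr m\<bar> + 2 * \<bar>c powr m - (c - v) powr m\<bar>"
    by (smt (verit))
  also have "\<dots> \<le> (4 * K + 2 * m) * v * c powr (m - 1)"
    using centred shift by (simp add: distrib_right)
  finally show ?thesis .
qed

lemma abs_inverse_diff_le:
  fixes a b E :: real
  assumes "0 < a" "0 < b" "\<bar>b - a\<bar> \<le> E * b"
  shows "\<bar>1 / a - 1 / b\<bar> \<le> E / a"
proof -
  have "1 / a - 1 / b = ((b - a) / b) / a" using assms by (simp add: field_simps)
  moreover have "\<bar>(b - a) / b\<bar> \<le> E" using assms by (simp add: abs_divide divide_le_eq)
  ultimately show ?thesis using assms by (simp only: abs_divide abs_of_pos divide_right_mono)
qed

lemma abs_inverse_mean_diff_le: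
  fixes a b c E :: real
  assumes "0 < a" "0 < b" "0 < c" "\<bar>b - a\<bar> \<le> E * b" "\<bar>c - a\<bar> \<le> E * c"
  shows "\<bar>1 / a - (1 / b + 1 / c) / 2\<bar> \<le> E / a"
proof -
  have "\<bar>1 / a - 1 / b\<bar> \<le> E / a" "\<bar>1 / a - 1 / c\<bar> \<le> E / a"
    using assms by (simp_all add: abs_inverse_diff_le)
  moreover have "\<bar>x - (y + z) / 2\<bar> \<le> e" if "\<bar>x - y\<bar> \<le> e" "\<bar>x - z\<bar> \<le> e" for x y z e :: real
    using that by (auto simp: abs_le_iff field_simps)
  ultimately show ?thesis by blast
qed

lemma abs_inverse_mean_diff_le2:
  fixes a b c E\<^sub>1 E\<^sub>2 E\<^sub>3 :: real
  assumes "0 < a" "0 < b" "0 < c"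
    and "\<bar>b + c - 2 * a\<bar> \<le> E\<^sub>1 * b" "\<bar>c - a\<bar> \<le> E\<^sub>2 * c" "\<bar>b - c\<bar> \<le> E\<^sub>3 * b"
  shows "\<bar>1 / a - (1 / b + 1 / c) / 2\<bar> \<le> (E\<^sub>1 + E\<^sub>2 * E\<^sub>3) / (2 * a)"
proof -
  have "1 / a - (1 / b + 1 / c) / 2 = ((b + c - 2 * a) / b + (c - a) / c * ((b - c) / b)) / (2 * a)"
    using assms by (simp add: field_simps)
  moreover have "\<bar>(b + c - 2 * a) / b + (c - a) / c * ((b - c) / b)\<bar> \<le> E\<^sub>1 + E\<^sub>2 * E\<^sub>3"
  proof (rule abs_triangle_ineq[THEN order_trans], intro add_mono)
    show "\<bar>(b + c - 2 * a) / b\<bar> \<le> E\<^sub>1" using assms by (simp add: abs_divide divide_le_eq)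
    have "\<bar>(c - a) / c * ((b - c) / b)\<bar> = \<bar>c - a\<bar> / c * (\<bar>b - c\<bar> / b)"
      using assms by (simp add: abs_mult abs_divide)
    also have "\<dots> \<le> E\<^sub>2 * E\<^sub>3"
    proof (intro mult_mono)
      show "0 \<le> E\<^sub>2"
        using assms(3,5) by (metis abs_ge_zero order_trans zero_le_mult_iff linorder_not_le)
    qed (use assms in \<open>simp_all add: divide_le_eq\<close>)
    finally show "\<bar>(c - a) / c * ((b - c) / b)\<bar> \<le> E\<^sub>2 * E\<^sub>3" .
  qed
  ultimately show ?thesis using assms by (simp only: abs_divide) (simp add: divide_right_mono)
qed

section \<open>Second differences of the profile\<close>

definition profile :: "real \<Rightarrow> 'a::real_normed_vector \<Rightarrow> real" where
  "profile p u = 1 / (1 + norm u powr p)"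

definition second_diff :: "('a::real_normed_vector \<Rightarrow> real) \<Rightarrow> 'a \<Rightarrow> 'a \<Rightarrow> real" where
  "second_diff f z w = f z - (f (z + w) + f (z - w)) / 2"

lemma profile_pos: "0 < profile p u"
  unfolding profile_def by (simp add: add_pos_nonneg)

lemma profile_le_one: "profile p u \<le> 1"
proof -
  have "0 < 1 + norm u powr p" by (simp add: add_pos_nonneg)
  then show ?thesis unfolding profile_def by (simp add: divide_le_eq_1_pos)
qed

lemma profile_le_one_plus_norm_powr:
  assumes "0 \<le> p"
  shows "profile p u \<le> 2 powr p * (1 + norm u) powr (- p)"
proof -
  have "(1 + norm u) powr p \<le> 2 powr p * (1 + norm u powr p)"
    using powr_add_le[of 1 "norm u" p] assms by simp
  moreover have "0 < (1 + norm u) powr p" "0 < 1 + norm u powr p"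
    using norm_ge_zero[of u] by (auto simp: add_pos_nonneg simp del: norm_ge_zero)
  ultimately show ?thesis
    by (simp add: profile_def powr_minus_divide field_simps)
qed

lemma abs_norm_powr_diff_le:
  fixes v w z :: "'a::real_normed_vector"
  assumes "1 \<le> p" "norm v \<le> 1 + norm z" "norm w \<le> 1 + norm z"
  shows "\<bar>norm v powr p - norm w powr p\<bar> \<le> p * norm (v - w) * (1 + norm z) powr (p - 1)"
proof -
  have "\<bar>norm v powr p - norm w powr p\<bar> \<le> p * max (norm v) (norm w) powr (p - 1) * \<bar>norm v - norm w\<bar>"
    using assms by (intro abs_powr_diff_le) auto
  also have "\<dots> \<le> p * (1 + norm z) powr (p - 1) * norm (v - w)"
    using assms by (intro mult_mono mult_left_mono powr_mono2 norm_triangle_ineq3) (auto simp: le_max_iff_disj)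
  finally show ?thesis by (simp add: algebra_simps)
qed

lemma one_plus_norm_powr_le_shifted:
  fixes z w :: "'a::real_normed_vector"
  assumes "1 \<le> p" "norm w \<le> 1"
  shows "(1 + norm z) powr (p - 1) \<le> 4 powr p * (1 + norm (z + w) powr p)"
proof -
  have "norm z \<le> norm (z + w) + norm w" using norm_triangle_ineq4[of "z + w" w] by simp
  then have "1 + norm z \<le> 2 * (1 + norm (z + w))" using assms norm_ge_zero[of "z + w"] by (smt (verit))
  then have "(1 + norm z) powr (p - 1) \<le> (2 * (1 + norm (z + w))) powr p"
    using assms by (intro order_trans[OF powr_mono powr_mono2]) auto
  also have "\<dots> = 2 powr p * (1 + norm (z + w)) powr p"
    using powr_mult[of 2 "1 + norm (z + w)" p] by simp
  also have "\<dots> \<le> 2 powr p * (2 powr p * (1 + norm (z + w) powr p))"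
    using assms powr_add_le[of 1 "norm (z + w)" p] by (intro mult_left_mono) auto
  also have "\<dots> = 4 powr p * (1 + norm (z + w) powr p)"
    by (simp add: powr_mult[symmetric])
  finally show ?thesis .
qed

lemma abs_norm_powr_diff_le_one_plus_norm_powr:
  fixes u v z :: "'a::real_normed_vector"
  assumes "1 \<le> p" "norm (u - z) \<le> 1" "norm (v - z) \<le> 1"
  shows "\<bar>norm v powr p - norm u powr p\<bar> \<le> p * 4 powr p * norm (v - u) * (1 + norm v powr p)"
proof -
  have "norm u \<le> 1 + norm z" "norm v \<le> 1 + norm z"
    using assms norm_triangle_ineq[of "u - z" z] norm_triangle_ineq[of "v - z" z] by simp_all
  then have "\<bar>norm v powr p - norm u powr p\<bar> \<le> p * norm (v - u) * (1 + norm z) powr (p - 1)"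
    using assms by (intro abs_norm_powr_diff_le) auto
  also have "\<dots> \<le> p * norm (v - u) * (4 powr p * (1 + norm v powr p))"
    using one_plus_norm_powr_le_shifted[OF assms(1,3), of z] assms by (intro mult_left_mono) auto
  finally show ?thesis by (simp add: mult_ac)
qed

lemma abs_second_diff_profile_le_first_order:
  fixes z w :: "'a::real_normed_vector"
  assumes "1 \<le> p" "norm w \<le> 1"
  shows "\<bar>second_diff (profile p) z w\<bar> \<le> p * 4 powr p * norm w * profile p z"
proof -
  define A B C where "A = norm z powr p" "B = norm (z + w) powr p" "C = norm (z - w) powr p"
  have "\<bar>(1 + B) - (1 + A)\<bar> \<le> p * 4 powr p * norm w * (1 + B)"
      "\<bar>(1 + C) - (1 + A)\<bar> \<le> p * 4 powr p * norm w * (1 + C)"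
    using abs_norm_powr_diff_le_one_plus_norm_powr[OF assms(1), of z z "z + w"]
      abs_norm_powr_diff_le_one_plus_norm_powr[OF assms(1), of z z "z - w"] assms
    by (simp_all add: A_B_C_def)
  then have "\<bar>1 / (1 + A) - (1 / (1 + B) + 1 / (1 + C)) / 2\<bar> \<le> p * 4 powr p * norm w / (1 + A)"
    by (intro abs_inverse_mean_diff_le) (auto simp: A_B_C_def add_pos_nonneg)
  then show ?thesis by (simp add: second_diff_def profile_def A_B_C_def)
qed

lemma abs_two_inner_le:
  fixes z w :: "'a::real_inner"
  shows "\<bar>2 * (z \<bullet> w)\<bar> \<le> (norm z)\<^sup>2 + (norm w)\<^sup>2"
proof -
  have "2 * (norm z * norm w) \<le> (norm z)\<^sup>2 + (norm w)\<^sup>2"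
    using sum_squares_bound[of "norm z" "norm w"] by (simp add: algebra_simps power2_eq_square)
  with Cauchy_Schwarz_ineq2[of z w] show ?thesis by simp
qed

lemma power2_two_inner_le:
  fixes z w :: "'a::real_inner"
  shows "(2 * (z \<bullet> w))\<^sup>2 \<le> 4 * ((norm z)\<^sup>2 + (norm w)\<^sup>2) * (norm w)\<^sup>2"
proof -
  have "(z \<bullet> w)\<^sup>2 \<le> (norm z * norm w)\<^sup>2"
    using Cauchy_Schwarz_ineq2[of z w] by (metis abs_ge_zero power_mono power2_abs)
  then show ?thesis by (simp add: power_mult_distrib algebra_simps add_increasing)
qed

lemma sum_squares_powr_le:
  fixes z w :: "'a::real_normed_vector"
  assumes "norm w \<le> 1" "0 \<le> r"
  shows "((norm z)\<^sup>2 + (norm w)\<^sup>2) powr r \<le> (1 + norm z) powr (2 * r)"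
proof -
  have "(norm w)\<^sup>2 \<le> 1" using assms by (simp add: power_le_one)
  then have "(norm z)\<^sup>2 + (norm w)\<^sup>2 \<le> (1 + norm z)\<^sup>2"
    using norm_ge_zero[of z] by (simp add: power2_sum del: norm_ge_zero)
  then have "((norm z)\<^sup>2 + (norm w)\<^sup>2) powr r \<le> ((1 + norm z)\<^sup>2) powr r"
    using assms by (intro powr_mono2) auto
  also have "\<dots> = (1 + norm z) powr (2 * r)"
    using powr_half_power2[of "1 + norm z" "2 * r"] by (simp add: add_pos_nonneg)
  finally show ?thesis .
qed

lemma abs_norm_powr_second_diff_le:
  fixes p :: real
  assumes "2 \<le> p"
  shows "\<exists>K\<ge>0. \<forall>z w::'a::real_inner. norm w \<le> 1 \<longrightarrow>
    \<bar>norm (z + w) powr p + norm (z - w) powr p - 2 * norm z powr p\<bar> \<le> K * (norm w)\<^sup>2 * (1 + norm z) powr (p - 2)"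
proof -
  define m where "m = p / 2"
  define K\<^sub>0 where "K\<^sub>0 = m * (m - 1) * (2 powr (m - 2) + 2 powr (2 - m)) + 16 * 2 powr m"
  have m: "1 \<le> m" "0 \<le> K\<^sub>0" using assms by (auto simp: m_def K\<^sub>0_def)
  have "\<bar>norm (z + w) powr p + norm (z - w) powr p - 2 * norm z powr p\<bar>
      \<le> (4 * K\<^sub>0 + 2 * m) * (norm w)\<^sup>2 * (1 + norm z) powr (p - 2)"
    if w: "norm w \<le> 1" for z w :: 'a
  proof (cases "z = 0 \<and> w = 0")
    case False
    \<comment> \<open>Since |z \<plusminus> w|^2 = c \<plusminus> e, this is a shifted second difference of s \<mapsto> s^(p/2) at c.\<close>
    define c v e where "c = (norm z)\<^sup>2 + (norm w)\<^sup>2" "v = (norm w)\<^sup>2" "e = 2 * (z \<bullet> w)"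
    have c: "0 < c" using False by (auto simp: c_v_e_def add_pos_nonneg add_nonneg_pos)
    have "(norm (z + w))\<^sup>2 = c + e" by (simp add: c_v_e_def dot_norm field_simps)
    moreover have "(norm (z - w))\<^sup>2 = c - e" by (simp add: c_v_e_def dot_norm_neg field_simps)
    moreover have "(norm z)\<^sup>2 = c - v" by (simp add: c_v_e_def)
    ultimately have "norm (z + w) powr p = (c + e) powr m" "norm (z - w) powr p = (c - e) powr m"
        "norm z powr p = (c - v) powr m"
      using powr_half_power2[of "norm (z + w)" p] powr_half_power2[of "norm (z - w)" p]
        powr_half_power2[of "norm z" p] assms by (simp_all add: m_def)
    moreover have "\<bar>(c + e) powr m + (c - e) powr m - 2 * (c - v) powr m\<bar> \<le> (4 * K\<^sub>0 + 2 * m) * v * c powr (m - 1)"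
      using abs_two_inner_le[of z w] power2_two_inner_le[of z w]
      by (intro abs_powr_shifted_second_diff_le[OF m powr_second_diff_le[OF m(1) c, unfolded K\<^sub>0_def[symmetric]] c])
        (simp_all add: c_v_e_def)
    moreover have "c powr (m - 1) \<le> (1 + norm z) powr (p - 2)"
      using sum_squares_powr_le[OF w, of "m - 1" z] m by (simp add: c_v_e_def m_def algebra_simps)
    then have "(4 * K\<^sub>0 + 2 * m) * v * c powr (m - 1) \<le> (4 * K\<^sub>0 + 2 * m) * v * (1 + norm z) powr (p - 2)"
      using m by (intro mult_left_mono) (auto simp: c_v_e_def)
    ultimately show ?thesis by (simp add: c_v_e_def)
  qed (use assms in simp)
  moreover have "0 \<le> 4 * K\<^sub>0 + 2 * m" using m by simp
  ultimately show ?thesis by blast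
qed

lemma abs_second_diff_profile_le_second_order:
  fixes p :: real
  assumes "2 \<le> p"
  shows "\<exists>M\<ge>0. \<forall>z w::'a::real_inner. norm w \<le> 1 \<longrightarrow>
    \<bar>second_diff (profile p) z w\<bar> \<le> M * (norm w)\<^sup>2 * profile p z"
proof -
  obtain K where K: "0 \<le> K" "\<And>z w::'a. norm w \<le> 1 \<Longrightarrow>
      \<bar>norm (z + w) powr p + norm (z - w) powr p - 2 * norm z powr p\<bar> \<le> K * (norm w)\<^sup>2 * (1 + norm z) powr (p - 2)"
    using abs_norm_powr_second_diff_le[OF assms] by blast
  have p: "1 \<le> p" using assms by simp
  define L where "L = 4 powr p"
  define M where "M = (K * L + 2 * p\<^sup>2 * L\<^sup>2) / 2"
  have "\<bar>second_diff (profile p) z w\<bar> \<le> M * (norm w)\<^sup>2 * profile p z" if w: "norm w \<le> 1" for z w :: 'a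
  proof -
    define A B C where "A = norm z powr p" "B = norm (z + w) powr p" "C = norm (z - w) powr p"
    have "\<bar>B + C - 2 * A\<bar> \<le> K * (norm w)\<^sup>2 * (1 + norm z) powr (p - 2)"
      using K(2)[OF w, of z] by (simp add: A_B_C_def)
    also have "\<dots> \<le> K * (norm w)\<^sup>2 * (1 + norm z) powr (p - 1)"
      using K(1) by (intro mult_left_mono powr_mono) auto
    also have "\<dots> \<le> K * (norm w)\<^sup>2 * (L * (1 + B))"
      using K(1) one_plus_norm_powr_le_shifted[OF p w, of z] by (intro mult_left_mono) (auto simp: L_def A_B_C_def)
    finally have E\<^sub>1: "\<bar>(1 + B) + (1 + C) - 2 * (1 + A)\<bar> \<le> (K * L * (norm w)\<^sup>2) * (1 + B)"
      by (simp add: mult_ac)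
    have E\<^sub>2: "\<bar>(1 + C) - (1 + A)\<bar> \<le> (p * L * norm w) * (1 + C)"
      using abs_norm_powr_diff_le_one_plus_norm_powr[OF p, of z z "z - w"] w by (simp add: A_B_C_def L_def)
    have "norm ((z + w) - (z - w)) = 2 * norm w"
      by (simp add: norm_mult_numeral1[symmetric] algebra_simps scaleR_2[symmetric])
    then have E\<^sub>3: "\<bar>(1 + B) - (1 + C)\<bar> \<le> (2 * p * L * norm w) * (1 + B)"
      using abs_norm_powr_diff_le_one_plus_norm_powr[OF p, of "z - w" z "z + w"] w
      by (simp add: A_B_C_def L_def mult_ac)
    have "\<bar>1 / (1 + A) - (1 / (1 + B) + 1 / (1 + C)) / 2\<bar>
        \<le> (K * L * (norm w)\<^sup>2 + p * L * norm w * (2 * p * L * norm w)) / (2 * (1 + A))"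
      by (rule abs_inverse_mean_diff_le2[OF _ _ _ E\<^sub>1 E\<^sub>2 E\<^sub>3]) (auto simp: A_B_C_def add_pos_nonneg)
    also have "\<dots> = M * (norm w)\<^sup>2 / (1 + A)"
      by (simp add: M_def power2_eq_square field_simps)
    finally show ?thesis by (simp add: second_diff_def profile_def A_B_C_def)
  qed
  moreover have "0 \<le> M" using K(1) by (simp add: M_def L_def)
  ultimately show ?thesis by blast
qed

lemma inverse_one_plus_mult_inverse_le:
  fixes a b W P :: real
  assumes "0 \<le> a" "0 \<le> b" "0 < W" "0 \<le> P" "a \<le> P * (b + W)"
  shows "1 / (1 + b) * (1 / W) \<le> (1 + P) * (1 / (1 + a)) * (1 / W + 1 / (1 + b))"
proof -
  have "a \<le> P * b + P * W" using assms by (simp add: algebra_simps)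
  moreover have "0 \<le> P * b" "0 \<le> P * W" using assms by simp_all
  ultimately have key: "1 + a \<le> (1 + P) * (1 + b + W)" using assms by (simp add: algebra_simps)
  have pos: "0 < 1 + a" "0 < 1 + b" using assms by simp_all
  then have "1 / (1 + b) * (1 / W) = (1 + a) / ((1 + a) * ((1 + b) * W))" by simp
  also have "\<dots> \<le> (1 + P) * (1 + b + W) / ((1 + a) * ((1 + b) * W))"
    using key pos assms by (intro divide_right_mono) auto
  also have "\<dots> = (1 + P) * (1 / (1 + a)) * (1 / W + 1 / (1 + b))"
    using pos assms by (simp add: field_simps)
  finally show ?thesis .
qed

lemma profile_mult_norm_powr_le:
  fixes z u w :: "'a::real_normed_vector"
  assumes "0 < p" "w \<noteq> 0" "norm z \<le> norm u + norm w"
  shows "profile p u * norm w powr (- p) \<le> (1 + 2 powr p) * profile p z * (norm w powr (- p) + profile p u)"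
proof -
  have "norm z powr p \<le> (norm u + norm w) powr p" using assms by (intro powr_mono2) auto
  also have "\<dots> \<le> 2 powr p * (norm u powr p + norm w powr p)" using assms by (intro powr_add_le) auto
  finally have "norm z powr p \<le> 2 powr p * (norm u powr p + norm w powr p)" .
  then show ?thesis
    using inverse_one_plus_mult_inverse_le[of "norm z powr p" "norm u powr p" "norm w powr p" "2 powr p"] assms
    by (simp add: profile_def powr_minus_divide)
qed

lemma abs_second_diff_profile_mult_norm_powr_le:
  fixes z w :: "'a::real_normed_vector"
  assumes "0 < p" "w \<noteq> 0"
  shows "\<bar>second_diff (profile p) z w\<bar> * norm w powr (- p)
    \<le> (2 + 2 powr p) * profile p z * (norm w powr (- p) + profile p (z + w) + profile p (z - w))"
proof -
  define s g g1 g2 P where "s = norm w powr (- p)" "g = profile p z" "g1 = profile p (z + w)"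
    "g2 = profile p (z - w)" "P = 2 powr p"
  have nonneg: "0 \<le> s" "0 \<le> g" "0 \<le> g1" "0 \<le> g2" "0 \<le> P"
    by (simp_all add: s_g_g1_g2_P_def less_imp_le[OF profile_pos])
  have "\<bar>second_diff (profile p) z w\<bar> \<le> g + g1 / 2 + g2 / 2"
    using nonneg by (auto simp: second_diff_def s_g_g1_g2_P_def abs_le_iff field_simps)
  then have "\<bar>second_diff (profile p) z w\<bar> * s \<le> (g + g1 / 2 + g2 / 2) * s"
    using nonneg by (intro mult_right_mono)
  also have "\<dots> = g * s + g1 * s / 2 + g2 * s / 2" by (simp add: algebra_simps)
  finally have "\<bar>second_diff (profile p) z w\<bar> * s \<le> g * s + g1 * s / 2 + g2 * s / 2" .
  moreover have "g1 * s \<le> (1 + P) * g * (s + g1)" "g2 * s \<le> (1 + P) * g * (s + g2)"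
    using profile_mult_norm_powr_le[OF assms, of z "z + w"] profile_mult_norm_powr_le[OF assms, of z "z - w"]
      norm_triangle_ineq4[of "z + w" w] norm_triangle_ineq[of "z - w" w]
    by (simp_all add: s_g_g1_g2_P_def)
  moreover have "g * s + (1 + P) * g * (s + g1) / 2 + (1 + P) * g * (s + g2) / 2 \<le> (2 + P) * g * (s + g1 + g2)"
  proof -
    have "(1 + P) / 2 * (g * g1) \<le> (2 + P) * (g * g1)" "(1 + P) / 2 * (g * g2) \<le> (2 + P) * (g * g2)"
      using nonneg by (intro mult_right_mono; simp)+
    then show ?thesis by (simp add: algebra_simps add_divide_distrib)
  qed
  ultimately show ?thesis by (simp add: s_g_g1_g2_P_def)
qed

lemma norm_powr_neg_le_one_plus_norm:
  fixes w :: "'a::real_normed_vector"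
  assumes "0 < \<epsilon>" "\<epsilon> \<le> norm w" "0 \<le> p"
  shows "norm w powr (- p) \<le> (1 + 1 / \<epsilon>) powr p * (1 + norm w) powr (- p)"
proof -
  have w: "0 < norm w" using assms by linarith
  have "1 + norm w \<le> (1 + 1 / \<epsilon>) * norm w"
    using assms by (simp add: algebra_simps le_divide_eq)
  then have "(1 + norm w) powr p \<le> (1 + 1 / \<epsilon>) powr p * norm w powr p"
    using assms by (simp add: powr_mult[symmetric] powr_mono2)
  moreover have "0 < 1 + norm w" using w by linarith
  then have "0 < (1 + norm w) powr p" "0 < norm w powr p"
    using w by (metis powr_gt_zero order_less_irrefl)+
  ultimately have "1 / norm w powr p \<le> (1 + 1 / \<epsilon>) powr p / (1 + norm w) powr p"
    by (simp add: field_simps)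
  then show ?thesis by (simp add: powr_minus_divide)
qed

lemma abs_second_diff_profile_le_far:
  fixes z w :: "'a::real_normed_vector"
  assumes "0 < p" "1 \<le> norm w"
  shows "\<bar>second_diff (profile p) z w\<bar> * norm w powr (- p) \<le> (2 + 2 powr p) * 2 powr p * profile p z *
    ((1 + norm w) powr (- p) + (1 + norm (z + w)) powr (- p) + (1 + norm (z - w)) powr (- p))"
proof -
  have "w \<noteq> 0" using assms by auto
  then have "\<bar>second_diff (profile p) z w\<bar> * norm w powr (- p)
      \<le> (2 + 2 powr p) * profile p z * (norm w powr (- p) + profile p (z + w) + profile p (z - w))"
    by (rule abs_second_diff_profile_mult_norm_powr_le[OF assms(1)])
  also have "\<dots> \<le> (2 + 2 powr p) * profile p z * (2 powr p * ((1 + norm w) powr (- p)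
      + (1 + norm (z + w)) powr (- p) + (1 + norm (z - w)) powr (- p)))"
    using norm_powr_neg_le_one_plus_norm[of 1 w p] profile_le_one_plus_norm_powr[of p] assms
    by (intro mult_left_mono) (auto simp: distrib_left less_imp_le[OF profile_pos] intro!: add_mono)
  finally show ?thesis by (simp add: mult_ac)
qed

lemma abs_second_diff_profile_le_near:
  fixes \<alpha> d :: real
  assumes "0 < \<alpha>" "\<alpha> < 2" "1 \<le> d"
  defines "p \<equiv> d + \<alpha>"
  obtains M \<beta> where "0 \<le> M" "\<alpha> < \<beta>" "\<beta> \<le> p"
    "\<And>z w::'a::real_inner. norm w \<le> 1 \<Longrightarrow> \<bar>second_diff (profile p) z w\<bar> \<le> M * norm w powr \<beta> * profile p z"
proof (cases "\<alpha> < 1")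
  case True
  show thesis
  proof
    show "\<bar>second_diff (profile p) z w\<bar> \<le> (p * 4 powr p) * norm w powr 1 * profile p z"
      if "norm w \<le> 1" for z w :: 'a
      using abs_second_diff_profile_le_first_order[of p w z] that assms by (simp add: powr_one)
  qed (use assms True in auto)
next
  case False
  then obtain M where M: "0 \<le> M" "\<And>z w::'a. norm w \<le> 1 \<Longrightarrow> \<bar>second_diff (profile p) z w\<bar> \<le> M * (norm w)\<^sup>2 * profile p z"
    using abs_second_diff_profile_le_second_order[of p] assms by auto
  show thesis
  proof
    show "\<bar>second_diff (profile p) z w\<bar> \<le> M * norm w powr 2 * profile p z" if "norm w \<le> 1" for z w :: 'a
      using M(2)[OF that] by simp
  qed (use assms False M(1) in auto)
qed

lemma abs_second_diff_profile_domination: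
  fixes \<alpha> d :: real
  assumes "0 < \<alpha>" "\<alpha> < 2" "1 \<le> d"
  defines "p \<equiv> d + \<alpha>"
  obtains M \<beta> where "0 \<le> M" "\<alpha> < \<beta>" "\<beta> \<le> p"
    "\<And>z w::'a::real_inner. \<bar>second_diff (profile p) z w\<bar> * norm w powr (- p) \<le> M * profile p z *
       (indicator (cball 0 1) w * norm w powr (\<beta> - p) + (1 + norm w) powr (- p)
        + (1 + norm (z + w)) powr (- p) + (1 + norm (z - w)) powr (- p))"
proof -
  obtain M\<^sub>0 \<beta> where M\<^sub>0: "0 \<le> M\<^sub>0" "\<alpha> < \<beta>" "\<beta> \<le> p"
    and near: "\<And>z w::'a. norm w \<le> 1 \<Longrightarrow> \<bar>second_diff (profile p) z w\<bar> \<le> M\<^sub>0 * norm w powr \<beta> * profile p z"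
    using abs_second_diff_profile_le_near[OF assms(1-3)] unfolding p_def by blast
  have p: "0 < p" using assms by (simp add: p_def)
  define P where "P = 2 powr p"
  define M where "M = max M\<^sub>0 ((2 + P) * P)"
  have "\<bar>second_diff (profile p) z w\<bar> * norm w powr (- p) \<le> M * profile p z *
       (indicator (cball 0 1) w * norm w powr (\<beta> - p) + (1 + norm w) powr (- p)
        + (1 + norm (z + w)) powr (- p) + (1 + norm (z - w)) powr (- p))" (is "_ \<le> M * _ * ?D")
    for z w :: 'a
  proof -
    have D: "0 \<le> ?D" by (simp add: indicator_def)
    consider "w = 0" | "w \<noteq> 0" "norm w \<le> 1" | "1 < norm w" by fastforce
    then show ?thesis
    proof cases
      case 1
      then show ?thesis using D M\<^sub>0 by (simp add: M_def less_imp_le[OF profile_pos])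
    next
      case 2
      have "\<bar>second_diff (profile p) z w\<bar> * norm w powr (- p) \<le> M\<^sub>0 * norm w powr \<beta> * profile p z * norm w powr (- p)"
        using near[OF 2(2)] by (intro mult_right_mono) auto
      also have "\<dots> = M\<^sub>0 * profile p z * (indicator (cball 0 1) w * norm w powr (\<beta> - p))"
        using 2 by (simp add: powr_diff powr_minus_divide)
      also have "\<dots> \<le> M * profile p z * ?D"
        using D M\<^sub>0 by (intro mult_mono) (auto simp: M_def indicator_def less_imp_le[OF profile_pos])
      finally show ?thesis .
    next
      case 3
      then have "\<bar>second_diff (profile p) z w\<bar> * norm w powr (- p) \<le> ((2 + P) * P) * profile p z * ?D"
        using abs_second_diff_profile_le_far[OF p, of w z] by (simp add: P_def indicator_def)
      also have "\<dots> \<le> M * profile p z * ?D"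
        using D by (intro mult_right_mono) (auto simp: M_def less_imp_le[OF profile_pos])
      finally show ?thesis .
    qed
  qed
  moreover have "0 \<le> M" using M\<^sub>0 by (simp add: M_def)
  ultimately show thesis using that M\<^sub>0(2,3) by blast
qed

section \<open>Integrability of power weights\<close>

lemma nn_integral_lborel_affine:
  fixes f :: "'a::euclidean_space \<Rightarrow> ennreal" and t :: 'a and c :: real
  assumes [measurable]: "f \<in> borel_measurable borel" and c: "c \<noteq> 0"
  shows "(\<integral>\<^sup>+x. f x \<partial>lborel) = ennreal (\<bar>c\<bar> ^ DIM('a)) * (\<integral>\<^sup>+x. f (t + c *\<^sub>R x) \<partial>lborel)"
  by (subst lborel_affine[OF c, of t]) (simp add: nn_integral_density nn_integral_distr nn_integral_cmult)

lemma nn_integral_lborel_scaleR: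
  fixes f :: "'a::euclidean_space \<Rightarrow> ennreal"
  assumes [measurable]: "f \<in> borel_measurable borel" and "0 < a"
  shows "(\<integral>\<^sup>+x. f (a *\<^sub>R x) \<partial>lborel) = ennreal (a powr - DIM('a)) * (\<integral>\<^sup>+x. f x \<partial>lborel)"
proof -
  have "ennreal (a powr - DIM('a)) * ennreal (a ^ DIM('a)) = 1"
    using assms by (simp add: ennreal_mult[symmetric] powr_minus_divide powr_realpow)
  then show ?thesis
    using nn_integral_lborel_affine[of f a 0] assms by (simp add: mult.assoc[symmetric])
qed

lemma nn_integral_abs_le:
  fixes f :: "real \<Rightarrow> ennreal"
  assumes [measurable]: "f \<in> borel_measurable borel"
  shows "(\<integral>\<^sup>+t. f \<bar>t\<bar> \<partial>lborel) \<le> 2 * (\<integral>\<^sup>+t. f t * indicator {0..} t \<partial>lborel)"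
proof -
  define g where "g t = f t * indicator {0..} t" for t
  have [measurable]: "g \<in> borel_measurable borel" unfolding g_def by measurable
  have "(\<integral>\<^sup>+t. f \<bar>t\<bar> \<partial>lborel) \<le> (\<integral>\<^sup>+t. g t + g (- t) \<partial>lborel)"
    by (intro nn_integral_mono) (auto simp: g_def indicator_def)
  also have "\<dots> = (\<integral>\<^sup>+t. g t \<partial>lborel) + (\<integral>\<^sup>+t. g (- t) \<partial>lborel)"
    by (rule nn_integral_add) auto
  also have "(\<integral>\<^sup>+t. g (- t) \<partial>lborel) = (\<integral>\<^sup>+t. g t \<partial>lborel)"
    using nn_integral_real_affine[of g "- 1" 0] by simp
  finally show ?thesis by (simp add: g_def mult_2)
qed

lemma nn_integral_powr_Icc_0_1_finite:
  fixes s :: real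
  assumes "0 \<le> s" "s < 1"
  shows "(\<integral>\<^sup>+t. ennreal (indicator {0..1} t * t powr (- s)) \<partial>lborel) < \<infinity>"
proof -
  have "((\<lambda>t. t powr (- s)) has_integral (1 powr (- s + 1) / (- s + 1))) {0..1}"
    by (rule has_integral_powr_from_0) (use assms in auto)
  then have "((\<lambda>t. if t \<in> {0..1} then t powr (- s) else 0) has_integral 1 / (1 - s)) UNIV"
    by (subst has_integral_restrict_UNIV) simp
  moreover have "(\<lambda>t. if t \<in> {0..1} then t powr (- s) else 0) = (\<lambda>t. indicator {0..1} t * t powr (- s))"
    by (auto simp: indicator_def)
  ultimately have "((\<lambda>t. indicator {0..1} t * t powr (- s)) has_integral 1 / (1 - s)) UNIV"
    by simp
  then have "(\<integral>\<^sup>+t. ennreal (indicator {0..1} t * t powr (- s)) \<partial>lborel) = ennreal (1 / (1 - s))"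
    by (intro nn_integral_has_integral_lborel) (auto simp: indicator_def)
  then show ?thesis by simp
qed

lemma nn_integral_one_plus_powr_finite:
  fixes r :: real
  assumes "1 < r"
  shows "(\<integral>\<^sup>+t. ennreal ((1 + t) powr (- r)) * indicator {0..} t \<partial>lborel) < \<infinity>"
proof -
  define F :: "real \<Rightarrow> real" where "F = (\<lambda>x. - ((1 + x) powr (1 - r)) / (r - 1))"
  have "(\<integral>\<^sup>+t. ennreal ((1 + t) powr (- r)) * indicator {0..} t \<partial>lborel) = 0 - F 0"
  proof (rule nn_integral_FTC_atLeast)
    show "(F has_real_derivative (1 + x) powr (- r)) (at x)" if "0 \<le> x" for x
    proof -
      have "((\<lambda>x. (1 + x) powr (1 - r)) has_real_derivative (1 - r) * (1 + x) powr (1 - r - of_nat 1) * 1) (at x)"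
        using that by (intro DERIV_fun_powr derivative_eq_intros) auto
      from DERIV_cdivide[OF DERIV_minus[OF this], of "r - 1"]
      have "(F has_real_derivative - ((1 - r) * (1 + x) powr (1 - r - of_nat 1) * 1) / (r - 1)) (at x)"
        unfolding F_def by simp
      moreover have "- ((1 - r) * (1 + x) powr (1 - r - of_nat 1) * 1) / (r - 1) = (1 + x) powr (- r)"
        using assms by (simp add: field_simps)
      ultimately show ?thesis by simp
    qed
    have "((\<lambda>x. (1 + x) powr (1 - r)) \<longlongrightarrow> 0) at_top"
      using assms by (intro tendsto_neg_powr filterlim_tendsto_add_at_top[OF tendsto_const filterlim_ident]) auto
    then have "((\<lambda>x. - ((1 + x) powr (1 - r)) / (r - 1)) \<longlongrightarrow> - 0 / (r - 1)) at_top"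
      by (intro tendsto_divide tendsto_minus tendsto_const) (use assms in auto)
    then show "(F \<longlongrightarrow> 0) at_top" by (simp add: F_def)
  qed auto
  then show ?thesis by simp
qed

lemma nn_integral_prod_Basis:
  fixes \<phi> :: "real \<Rightarrow> ennreal"
  assumes [measurable]: "\<phi> \<in> borel_measurable borel"
  shows "(\<integral>\<^sup>+y. (\<Prod>b\<in>Basis. \<phi> (y \<bullet> b)) \<partial>(lborel :: 'a::euclidean_space measure)) = (\<integral>\<^sup>+t. \<phi> t \<partial>lborel) ^ DIM('a)"
  using nn_integral_lborel_prod[of "\<lambda>_. \<phi>"] by simp

lemma nn_integral_one_plus_norm_powr_finite:
  fixes p :: real
  assumes "DIM('a) < p"
  shows "(\<integral>\<^sup>+w. ennreal ((1 + norm w) powr (- p)) \<partial>(lborel :: 'a::euclidean_space measure)) < \<infinity>"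
proof -
  define r where "r = p / DIM('a)"
  define \<phi> where "\<phi> t = ennreal ((1 + \<bar>t\<bar>) powr (- r))" for t
  have [measurable]: "\<phi> \<in> borel_measurable borel" unfolding \<phi>_def by measurable
  have r: "1 < r" using assms by (simp add: r_def field_simps)
  have "ennreal ((1 + norm w) powr (- p)) \<le> (\<Prod>b\<in>Basis. \<phi> (w \<bullet> b))" for w :: 'a
  proof -
    have "1 + norm w \<noteq> 0" by (metis add_pos_nonneg norm_ge_zero zero_less_one less_irrefl)
    then have "(1 + norm w) powr (- p) = (\<Prod>b\<in>(Basis::'a set). (1 + norm w) powr (- r))"
      by (simp add: r_def powr_power)
    also have "\<dots> \<le> (\<Prod>b\<in>Basis. (1 + \<bar>w \<bullet> b\<bar>) powr (- r))"
      using r by (intro prod_mono conjI powr_mono2') (auto simp: Basis_le_norm)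
    finally show ?thesis by (simp add: \<phi>_def prod_ennreal ennreal_leI)
  qed
  then have "(\<integral>\<^sup>+w. ennreal ((1 + norm w) powr (- p)) \<partial>(lborel :: 'a measure)) \<le> (\<integral>\<^sup>+t. \<phi> t \<partial>lborel) ^ DIM('a)"
    by (subst nn_integral_prod_Basis[symmetric]) (auto intro: nn_integral_mono)
  also have "\<dots> < \<infinity>"
  proof -
    have "(\<integral>\<^sup>+t. \<phi> t \<partial>lborel) \<le> 2 * (\<integral>\<^sup>+t. ennreal ((1 + t) powr (- r)) * indicator {0..} t \<partial>lborel)"
      using nn_integral_abs_le[of "\<lambda>t. ennreal ((1 + t) powr (- r))"] by (simp add: \<phi>_def)
    also have "\<dots> < \<infinity>" using nn_integral_one_plus_powr_finite[OF r] by (simp add: ennreal_mult_less_top)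
    finally show ?thesis by (simp add: power_less_top_ennreal)
  qed
  finally show ?thesis .
qed

lemma nn_integral_Icc_abs_powr_finite:
  fixes s :: real
  assumes "0 \<le> s" "s < 1"
  shows "(\<integral>\<^sup>+t. indicator {-1..1} t * (if t = 0 then \<infinity> else ennreal (\<bar>t\<bar> powr (- s))) \<partial>lborel) < \<infinity>"
proof -
  define f where "f t = ennreal (indicator {-1..1} t * t powr (- s))" for t :: real
  have [measurable]: "f \<in> borel_measurable borel" unfolding f_def by measurable
  have "(\<integral>\<^sup>+t. indicator {-1..1} t * (if t = 0 then \<infinity> else ennreal (\<bar>t\<bar> powr (- s))) \<partial>lborel)
      = (\<integral>\<^sup>+t. f \<bar>t\<bar> \<partial>lborel)"
    by (intro nn_integral_cong_AE) (use AE_lborel_singleton[of 0] in \<open>auto simp: f_def indicator_def\<close>)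
  also have "\<dots> \<le> 2 * (\<integral>\<^sup>+t. f t * indicator {0..} t \<partial>lborel)"
    by (rule nn_integral_abs_le) simp
  also have "(\<integral>\<^sup>+t. f t * indicator {0..} t \<partial>lborel) = (\<integral>\<^sup>+t. ennreal (indicator {0..1} t * t powr (- s)) \<partial>lborel)"
    by (intro nn_integral_cong) (auto simp: f_def indicator_def)
  also have "2 * \<dots> < \<infinity>"
    using nn_integral_powr_Icc_0_1_finite[OF assms] by (simp add: ennreal_mult_less_top)
  finally show ?thesis .
qed

lemma nn_integral_cball_norm_powr_finite:
  fixes q :: real
  assumes "0 \<le> q" "q < DIM('a)"
  shows "(\<integral>\<^sup>+w. ennreal (indicator (cball 0 1) w * norm w powr (- q)) \<partial>(lborel :: 'a::euclidean_space measure)) < \<infinity>"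
proof -
  \<comment> \<open>A vanishing coordinate of w \<noteq> 0 makes the dominating product infinite, so the bound |w\<bullet>b| \<le> |w| suffices.\<close>
  define s where "s = q / DIM('a)"
  define \<phi> where "\<phi> t = indicator {-1..1} t * (if t = 0 then \<infinity> else ennreal (\<bar>t\<bar> powr (- s)))" for t
  have [measurable]: "\<phi> \<in> borel_measurable borel" unfolding \<phi>_def by measurable
  have s: "0 \<le> s" "s < 1" using assms by (simp_all add: s_def field_simps)
  have "ennreal (indicator (cball 0 1) w * norm w powr (- q)) \<le> (\<Prod>b\<in>Basis. \<phi> (w \<bullet> b))" for w :: 'a
  proof (cases "w \<in> cball 0 1 \<and> w \<noteq> 0")
    case w: True
    have ind: "indicator {-1..1} (w \<bullet> b) = (1::ennreal)" if "b \<in> Basis" for b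
      using Basis_le_norm[OF that, of w] w by (auto simp: indicator_def abs_le_iff)
    show ?thesis
    proof (cases "\<exists>b\<in>Basis. w \<bullet> b = 0")
      case True
      then have "(\<Prod>b\<in>Basis. \<phi> (w \<bullet> b)) = \<infinity>"
        using ind by (auto simp: ennreal_prod_eq_top \<phi>_def)
      then show ?thesis by simp
    next
      case False
      have "norm w powr (- q) = (\<Prod>b\<in>(Basis::'a set). norm w powr (- s))"
        using w by (simp add: s_def powr_power)
      also have "\<dots> \<le> (\<Prod>b\<in>Basis. \<bar>w \<bullet> b\<bar> powr (- s))"
        using False s by (intro prod_mono conjI powr_mono2') (auto simp: Basis_le_norm)
      finally show ?thesis
        using w False ind by (simp add: \<phi>_def prod_ennreal ennreal_leI)
    qed
  qed (auto simp: indicator_def)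
  then have "(\<integral>\<^sup>+w. ennreal (indicator (cball 0 1) w * norm w powr (- q)) \<partial>(lborel :: 'a measure))
      \<le> (\<integral>\<^sup>+t. \<phi> t \<partial>lborel) ^ DIM('a)"
    by (subst nn_integral_prod_Basis[symmetric]) (auto intro: nn_integral_mono)
  also have "\<dots> < \<infinity>"
    unfolding \<phi>_def using nn_integral_Icc_abs_powr_finite[OF s] by (simp add: power_less_top_ennreal)
  finally show ?thesis .
qed

lemma nn_integral_cball_powr_plus_tails:
  fixes p q :: real
  assumes "0 \<le> q" "q < DIM('a)" "DIM('a) < p"
  obtains I where "0 \<le> I"
    "\<And>z::'a::euclidean_space. (\<integral>\<^sup>+w. ennreal (indicator (cball 0 1) w * norm w powr (- q))
       + ennreal ((1 + norm w) powr (- p)) + ennreal ((1 + norm (z + w)) powr (- p))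
       + ennreal ((1 + norm (z - w)) powr (- p)) \<partial>lborel) = ennreal I"
proof -
  define I\<^sub>1 where "I\<^sub>1 = (\<integral>\<^sup>+w. ennreal (indicator (cball 0 1) w * norm w powr (- q)) \<partial>(lborel :: 'a measure))"
  define I\<^sub>2 where "I\<^sub>2 = (\<integral>\<^sup>+w. ennreal ((1 + norm w) powr (- p)) \<partial>(lborel :: 'a measure))"
  have "I\<^sub>1 < \<infinity>" unfolding I\<^sub>1_def using assms by (intro nn_integral_cball_norm_powr_finite)
  moreover have "I\<^sub>2 < \<infinity>" unfolding I\<^sub>2_def using assms by (intro nn_integral_one_plus_norm_powr_finite)
  ultimately obtain I where I: "0 \<le> I" "I\<^sub>1 + I\<^sub>2 + I\<^sub>2 + I\<^sub>2 = ennreal I"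
    by (cases "I\<^sub>1 + I\<^sub>2 + I\<^sub>2 + I\<^sub>2") auto
  have shift: "(\<integral>\<^sup>+w. ennreal ((1 + norm (z + w)) powr (- p)) \<partial>lborel) = I\<^sub>2"
      "(\<integral>\<^sup>+w. ennreal ((1 + norm (z - w)) powr (- p)) \<partial>lborel) = I\<^sub>2" for z :: 'a
    using nn_integral_lborel_affine[of "\<lambda>w. ennreal ((1 + norm w) powr (- p))" 1 z]
      nn_integral_lborel_affine[of "\<lambda>w. ennreal ((1 + norm w) powr (- p))" "- 1" z]
    by (simp_all add: I\<^sub>2_def)
  have [measurable]: "cball (0::'a) 1 \<in> sets borel" by simp
  show thesis
  proof (rule that[OF I(1)])
    fix z :: 'a
    show "(\<integral>\<^sup>+w. ennreal (indicator (cball 0 1) w * norm w powr (- q))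
       + ennreal ((1 + norm w) powr (- p)) + ennreal ((1 + norm (z + w)) powr (- p))
       + ennreal ((1 + norm (z - w)) powr (- p)) \<partial>lborel) = ennreal I"
      apply (subst nn_integral_add, measurable, measurable)+
      apply (simp add: shift I\<^sub>1_def I\<^sub>2_def I(2)[symmetric])
      done
  qed
qed

lemma nn_integral_abs_second_diff_profile_le:
  fixes \<alpha> :: real
  assumes "0 < \<alpha>" "\<alpha> < 2"
  defines "p \<equiv> DIM('a) + \<alpha>"
  obtains C where "0 \<le> C"
    "\<And>z::'a::euclidean_space. (\<integral>\<^sup>+w. ennreal (\<bar>second_diff (profile p) z w\<bar> * norm w powr (- p)) \<partial>lborel)
       \<le> ennreal (C * profile p z)"
proof -
  have d: "1 \<le> real DIM('a)" by (simp add: DIM_positive Suc_le_eq)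
  obtain M \<beta> where M: "0 \<le> M" "\<alpha> < \<beta>" "\<beta> \<le> p"
    and dom: "\<And>z w::'a. \<bar>second_diff (profile p) z w\<bar> * norm w powr (- p) \<le> M * profile p z *
       (indicator (cball 0 1) w * norm w powr (\<beta> - p) + (1 + norm w) powr (- p)
        + (1 + norm (z + w)) powr (- p) + (1 + norm (z - w)) powr (- p))"
    using abs_second_diff_profile_domination[OF assms(1,2) d] unfolding p_def by blast
  obtain I where I: "0 \<le> I" "\<And>z::'a. (\<integral>\<^sup>+w. ennreal (indicator (cball 0 1) w * norm w powr (- (p - \<beta>)))
       + ennreal ((1 + norm w) powr (- p)) + ennreal ((1 + norm (z + w)) powr (- p))
       + ennreal ((1 + norm (z - w)) powr (- p)) \<partial>lborel) = ennreal I"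
    using nn_integral_cball_powr_plus_tails[where 'a='a, of "p - \<beta>" p] M assms by (auto simp: p_def)
  show thesis
  proof (rule that[of "M * I"])
    show "0 \<le> M * I" using M I by simp
    fix z :: 'a
    have [measurable]: "cball (0::'a) 1 \<in> sets borel" by simp
    have g: "0 \<le> M * profile p z" using M by (simp add: less_imp_le[OF profile_pos])
    have "(\<integral>\<^sup>+w. ennreal (\<bar>second_diff (profile p) z w\<bar> * norm w powr (- p)) \<partial>lborel)
        \<le> (\<integral>\<^sup>+w. ennreal (M * profile p z) * (ennreal (indicator (cball 0 1) w * norm w powr (- (p - \<beta>)))
          + ennreal ((1 + norm w) powr (- p)) + ennreal ((1 + norm (z + w)) powr (- p))
          + ennreal ((1 + norm (z - w)) powr (- p))) \<partial>lborel)"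
      using dom g by (intro nn_integral_mono)
        (simp add: ennreal_mult[symmetric] ennreal_plus[symmetric] ennreal_leI indicator_def del: ennreal_plus)
    also have "\<dots> = ennreal (M * profile p z) * ennreal I"
      by (subst nn_integral_cmult) (measurable, simp only: I(2))
    also have "\<dots> = ennreal (M * I * profile p z)"
      using g I(1) by (simp add: ennreal_mult[symmetric] mult_ac)
    finally show "(\<integral>\<^sup>+w. ennreal (\<bar>second_diff (profile p) z w\<bar> * norm w powr (- p)) \<partial>lborel)
        \<le> ennreal (M * I * profile p z)" .
  qed
qed

section \<open>The operator on rescaled profiles\<close>

lemma integrable_one_plus_norm_powr:
  fixes p :: real
  assumes "DIM('a) < p"
  shows "integrable (lborel :: 'a::euclidean_space measure) (\<lambda>w. (1 + norm w) powr (- p))"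
  using nn_integral_one_plus_norm_powr_finite[OF assms] by (intro integrableI_bounded) auto

lemma distr_lborel_uminus: "distr lborel borel uminus = (lborel :: 'a::euclidean_space measure)"
  using lborel_affine[of "- 1" "0::'a"] by (simp add: density_1)

lemma integrable_lborel_uminus:
  fixes f :: "'a::euclidean_space \<Rightarrow> real"
  assumes [measurable]: "f \<in> borel_measurable borel" and "integrable lborel f"
  shows "integrable lborel (\<lambda>y. f (- y))"
  using assms(2) by (subst (asm) distr_lborel_uminus[symmetric]) (simp add: integrable_distr_eq)

lemma integral_lborel_uminus:
  fixes f :: "'a::euclidean_space \<Rightarrow> real"
  assumes [measurable]: "f \<in> borel_measurable borel"
  shows "(LINT y|lborel. f (- y)) = (LINT y|lborel. f y)"
  by (subst (2) distr_lborel_uminus[symmetric]) (simp add: integral_distr)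

lemma integrable_truncated_kernel:
  fixes K :: "'a::euclidean_space \<Rightarrow> 'a \<Rightarrow> real" and u :: "'a \<Rightarrow> real" and B C p \<epsilon> :: real
  assumes [measurable]: "u \<in> borel_measurable borel" "(\<lambda>y. K x y) \<in> borel_measurable borel"
    and u: "\<And>y. \<bar>u x - u y\<bar> \<le> B"
    and K: "\<And>y. y \<noteq> 0 \<Longrightarrow> \<bar>K x y\<bar> \<le> C * norm y powr (- p)"
    and "DIM('a) < p" "0 < \<epsilon>"
  shows "integrable lborel (\<lambda>y. indicator {y. \<epsilon> < norm y} y * ((u x - u (x + y)) * K x y))"
proof (rule Bochner_Integration.integrable_bound)
  show "integrable lborel (\<lambda>y::'a. B * C * (1 + 1 / \<epsilon>) powr p * (1 + norm y) powr (- p))"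
    using integrable_one_plus_norm_powr[OF assms(5)] by simp
  show "AE y in lborel. norm (indicator {y. \<epsilon> < norm y} y * ((u x - u (x + y)) * K x y))
      \<le> norm (B * C * (1 + 1 / \<epsilon>) powr p * (1 + norm y) powr (- p))"
  proof (intro AE_I2)
    fix y :: 'a
    show "norm (indicator {y. \<epsilon> < norm y} y * ((u x - u (x + y)) * K x y))
      \<le> norm (B * C * (1 + 1 / \<epsilon>) powr p * (1 + norm y) powr (- p))"
    proof (cases "\<epsilon> < norm y")
      case True
      then have y: "y \<noteq> 0" using assms by auto
      have B: "0 \<le> B" using u[of x] by simp
      have C: "0 \<le> C" using K[OF y] by (smt (verit) powr_gt_zero zero_le_mult_iff norm_eq_zero y)
      have "\<bar>(u x - u (x + y)) * K x y\<bar> \<le> B * (C * norm y powr (- p))"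
        unfolding abs_mult using u K[OF y] B by (intro mult_mono) auto
      also have "\<dots> \<le> B * (C * ((1 + 1 / \<epsilon>) powr p * (1 + norm y) powr (- p)))"
        using norm_powr_neg_le_one_plus_norm[of \<epsilon> y p] True B C assms by (intro mult_left_mono) auto
      finally show ?thesis using True B C by (simp add: mult_ac)
    qed simp
  qed
qed simp_all

lemma integral_truncated_eq_second_diff:
  fixes K :: "'a::euclidean_space \<Rightarrow> 'a \<Rightarrow> real" and u :: "'a \<Rightarrow> real"
  assumes [measurable]: "u \<in> borel_measurable borel" "(\<lambda>y. K x y) \<in> borel_measurable borel"
    and symm: "\<And>y. K x (- y) = K x y"
    and int: "integrable lborel (\<lambda>y. indicator {y. \<epsilon> < norm y} y * ((u x - u (x + y)) * K x y))"
  shows "(LINT y|lborel. indicator {y. \<epsilon> < norm y} y * ((u x - u (x + y)) * K x y))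
    = (LINT y|lborel. indicator {y. \<epsilon> < norm y} y * (second_diff u x y * K x y))"
proof -
  define f where "f y = indicator {y. \<epsilon> < norm y} y * ((u x - u (x + y)) * K x y)" for y
  have [measurable]: "f \<in> borel_measurable borel" unfolding f_def by measurable
  have "(\<lambda>y. indicator {y. \<epsilon> < norm y} y * (second_diff u x y * K x y)) = (\<lambda>y. (f y + f (- y)) / 2)"
    by (auto simp: f_def second_diff_def symm indicator_def field_simps)
  moreover have "integrable lborel f" unfolding f_def by (rule int)
  moreover from this have "integrable lborel (\<lambda>y. f (- y))" by (rule integrable_lborel_uminus[rotated]) simp
  ultimately have "(LINT y|lborel. indicator {y. \<epsilon> < norm y} y * (second_diff u x y * K x y))
      = ((LINT y|lborel. f y) + (LINT y|lborel. f (- y))) / 2"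
    by simp
  also have "(LINT y|lborel. f (- y)) = (LINT y|lborel. f y)" by (rule integral_lborel_uminus) simp
  finally show ?thesis by (simp add: f_def)
qed

lemma tendsto_integral_truncated:
  fixes f :: "'a::euclidean_space \<Rightarrow> real"
  assumes [measurable]: "f \<in> borel_measurable borel" and "integrable lborel f"
  shows "((\<lambda>\<epsilon>. LINT y|lborel. indicator {y. \<epsilon> < norm y} y * f y) \<longlongrightarrow> (LINT y|lborel. f y)) (at_right 0)"
proof -
  have "((\<lambda>t. LINT y|lborel. indicator {y. inverse t < norm y} y * f y) \<longlongrightarrow> (LINT y|lborel. f y)) at_top"
  proof (rule integral_dominated_convergence_at_top[where w="\<lambda>y. norm (f y)"])
    show "AE y in lborel. ((\<lambda>t. indicator {y. inverse t < norm y} y * f y) \<longlongrightarrow> f y) at_top"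
      using AE_lborel_singleton[of 0]
    proof eventually_elim
      case (elim y)
      have "\<forall>\<^sub>F t in at_top. indicator {y. inverse t < norm y} y * f y = f y"
        using eventually_gt_at_top[of "inverse (norm y)"]
      proof eventually_elim
        case (elim t)
        then have "inverse t < norm y"
          using \<open>y \<noteq> 0\<close> by (metis inverse_inverse_eq inverse_less_iff_less inverse_positive_iff_positive
              less_trans zero_less_norm_iff)
        then show ?case by simp
      qed
      then show ?case by (rule tendsto_eventually)
    qed
  qed (use assms in \<open>auto simp: indicator_def\<close>)
  from filterlim_compose[OF this filterlim_inverse_at_top_right] show ?thesis by simp
qed

lemma Lalpha_eq_integral_second_diff:
  fixes K :: "'a::euclidean_space \<Rightarrow> 'a \<Rightarrow> real" and u :: "'a \<Rightarrow> real"
  assumes [measurable]: "u \<in> borel_measurable borel" "(\<lambda>y. K x y) \<in> borel_measurable borel"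
    and symm: "\<And>y. K x (- y) = K x y"
    and trunc: "\<And>\<epsilon>. 0 < \<epsilon> \<Longrightarrow> integrable lborel (\<lambda>y. indicator {y. \<epsilon> < norm y} y * ((u x - u (x + y)) * K x y))"
    and int: "integrable lborel (\<lambda>y. second_diff u x y * K x y)"
  shows "Lalpha K u x = (LINT y|lborel. second_diff u x y * K x y)"
proof -
  have [measurable]: "(\<lambda>y. second_diff u x y * K x y) \<in> borel_measurable borel"
    unfolding second_diff_def by measurable
  have "((\<lambda>\<epsilon>. LINT y|lborel. indicator {y. \<epsilon> < norm y} y * ((u x - u (x + y)) * K x y))
      \<longlongrightarrow> (LINT y|lborel. second_diff u x y * K x y)) (at_right 0)"
  proof (rule Lim_transform_eventually[OF tendsto_integral_truncated[OF _ int]])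
    show "\<forall>\<^sub>F \<epsilon> in at_right 0. (LINT y|lborel. indicator {y. \<epsilon> < norm y} y * (second_diff u x y * K x y))
        = (LINT y|lborel. indicator {y. \<epsilon> < norm y} y * ((u x - u (x + y)) * K x y))"
      using eventually_at_right_less[of "0::real"]
    proof eventually_elim
      case (elim \<epsilon>)
      show ?case by (rule integral_truncated_eq_second_diff[symmetric]) (use symm trunc[OF elim] in auto)
    qed
  qed simp
  then show ?thesis unfolding Lalpha_def by (intro tendsto_Lim) auto
qed

lemma nn_integral_abs_second_diff_profile_scaled_le:
  fixes p a C :: real and x :: "'a::euclidean_space"
  assumes C: "\<And>z::'a. (\<integral>\<^sup>+w. ennreal (\<bar>second_diff (profile p) z w\<bar> * norm w powr (- p)) \<partial>lborel)
      \<le> ennreal (C * profile p z)"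
    and "0 \<le> C" and a: "0 < a"
  shows "(\<integral>\<^sup>+y. ennreal (\<bar>second_diff (\<lambda>z. profile p (a *\<^sub>R z)) x y\<bar> * norm y powr (- p)) \<partial>lborel)
    \<le> ennreal (a powr (p - DIM('a)) * C * profile p (a *\<^sub>R x))"
proof -
  define F where "F w = ennreal (\<bar>second_diff (profile p) (a *\<^sub>R x) w\<bar> * norm w powr (- p))" for w
  have [measurable]: "F \<in> borel_measurable borel"
    unfolding F_def second_diff_def profile_def by measurable
  have "ennreal (\<bar>second_diff (\<lambda>z. profile p (a *\<^sub>R z)) x y\<bar> * norm y powr (- p)) = ennreal (a powr p) * F (a *\<^sub>R y)"
    for y :: 'a
  proof -
    have "norm y powr (- p) = a powr p * norm (a *\<^sub>R y) powr (- p)"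
      using a by (simp add: powr_mult powr_minus_divide)
    then show ?thesis
      using a by (simp add: F_def second_diff_def scaleR_add_right scaleR_diff_right ennreal_mult[symmetric] mult_ac)
  qed
  then have "(\<integral>\<^sup>+y. ennreal (\<bar>second_diff (\<lambda>z. profile p (a *\<^sub>R z)) x y\<bar> * norm y powr (- p)) \<partial>lborel)
      = ennreal (a powr p) * ennreal (a powr - DIM('a)) * (\<integral>\<^sup>+w. F w \<partial>lborel)"
    using a by (simp add: nn_integral_cmult nn_integral_lborel_scaleR mult.assoc)
  also have "\<dots> \<le> ennreal (a powr p) * ennreal (a powr - DIM('a)) * ennreal (C * profile p (a *\<^sub>R x))"
    using C[of "a *\<^sub>R x"] by (intro mult_left_mono) (simp_all add: F_def)
  also have "\<dots> = ennreal (a powr (p - DIM('a)) * C * profile p (a *\<^sub>R x))"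
    using a \<open>0 \<le> C\<close> by (simp add: ennreal_mult[symmetric] powr_diff powr_minus_divide mult_ac
        less_imp_le[OF profile_pos])
  finally show ?thesis .
qed

lemma abs_Lalpha_le:
  fixes K :: "'a::euclidean_space \<Rightarrow> 'a \<Rightarrow> real" and u :: "'a \<Rightarrow> real" and B C p :: real
  assumes [measurable]: "u \<in> borel_measurable borel" "(\<lambda>y. K x y) \<in> borel_measurable borel"
    and symm: "\<And>y. K x (- y) = K x y"
    and u: "\<And>y. \<bar>u x - u y\<bar> \<le> 1"
    and K: "\<And>y. y \<noteq> 0 \<Longrightarrow> \<bar>K x y\<bar> \<le> C * norm y powr (- p)" "DIM('a) < p"
    and bound: "(\<integral>\<^sup>+y. ennreal \<bar>second_diff u x y * K x y\<bar> \<partial>lborel) \<le> ennreal B" "0 \<le> B"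
  shows "\<bar>Lalpha K u x\<bar> \<le> B"
proof -
  have int: "integrable lborel (\<lambda>y. second_diff u x y * K x y)"
    using bound by (intro integrableI_bounded) (auto simp: second_diff_def top_unique intro: le_less_trans)
  have "Lalpha K u x = (LINT y|lborel. second_diff u x y * K x y)"
    by (rule Lalpha_eq_integral_second_diff[where u = u and K = K and x = x])
      (use symm int integrable_truncated_kernel[of u K x 1 C p] u K in simp_all)
  then have "\<bar>Lalpha K u x\<bar> \<le> (LINT y|lborel. \<bar>second_diff u x y * K x y\<bar>)"
    by (simp add: integral_abs_bound)
  also have "\<dots> = enn2real (\<integral>\<^sup>+y. ennreal \<bar>second_diff u x y * K x y\<bar> \<partial>lborel)"
    by (rule integral_eq_nn_integral) (simp_all add: second_diff_def)
  also have "\<dots> \<le> B"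
    using bound by (intro enn2real_leI) simp_all
  finally show ?thesis .
qed

lemma abs_Lalpha_profile_scaled_le:
  fixes K :: "'a::euclidean_space \<Rightarrow> 'a \<Rightarrow> real" and \<alpha> C\<^sub>K :: real
  assumes "0 < \<alpha>" "\<alpha> < 2"
    and meas: "\<And>x. (\<lambda>y. K x y) \<in> borel_measurable borel"
    and symm: "\<And>x y. K x (- y) = K x y"
    and K: "\<And>x y. 0 \<le> K x y" "\<And>x y. y \<noteq> 0 \<Longrightarrow> K x y \<le> C\<^sub>K * norm y powr (- (DIM('a) + \<alpha>))"
    and "0 \<le> C\<^sub>K"
  defines "p \<equiv> DIM('a) + \<alpha>"
  obtains D where "0 < D"
    "\<And>a x. 0 < a \<Longrightarrow> \<bar>Lalpha K (\<lambda>z. profile p (a *\<^sub>R z)) x\<bar> \<le> D * a powr \<alpha> * profile p (a *\<^sub>R x)"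
proof -
  obtain C where C: "0 \<le> C" "\<And>z::'a. (\<integral>\<^sup>+w. ennreal (\<bar>second_diff (profile p) z w\<bar> * norm w powr (- p)) \<partial>lborel)
      \<le> ennreal (C * profile p z)"
    using nn_integral_abs_second_diff_profile_le[OF assms(1,2)] unfolding p_def by blast
  show thesis
  proof
    show "0 < C\<^sub>K * C + 1" using C \<open>0 \<le> C\<^sub>K\<close> by (simp add: add_nonneg_pos)
    fix a :: real and x :: 'a
    assume a: "0 < a"
    define h where "h z = profile p (a *\<^sub>R z)" for z :: 'a
    have [measurable]: "h \<in> borel_measurable borel" unfolding h_def profile_def by measurable
    have [measurable]: "(\<lambda>y. K x y) \<in> borel_measurable borel" by (rule meas)
    have "ennreal \<bar>second_diff h x y * K x y\<bar> \<le> ennreal C\<^sub>K * ennreal (\<bar>second_diff h x y\<bar> * norm y powr (- p))"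
      for y :: 'a
    proof (cases "y = 0")
      case False
      then have "\<bar>second_diff h x y\<bar> * K x y \<le> \<bar>second_diff h x y\<bar> * (C\<^sub>K * norm y powr (- p))"
        using K by (intro mult_left_mono) (auto simp: p_def)
      then show ?thesis
        using K(1)[of x y] \<open>0 \<le> C\<^sub>K\<close> by (simp add: abs_mult ennreal_mult[symmetric] ennreal_leI mult_ac)
    qed (simp add: second_diff_def)
    then have "(\<integral>\<^sup>+y. ennreal \<bar>second_diff h x y * K x y\<bar> \<partial>lborel)
        \<le> ennreal C\<^sub>K * (\<integral>\<^sup>+y. ennreal (\<bar>second_diff h x y\<bar> * norm y powr (- p)) \<partial>lborel)"
      by (subst nn_integral_cmult[symmetric]) (auto simp: second_diff_def intro: nn_integral_mono)
    also have "\<dots> \<le> ennreal C\<^sub>K * ennreal (a powr (p - DIM('a)) * C * profile p (a *\<^sub>R x))"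
      unfolding h_def by (intro mult_left_mono nn_integral_abs_second_diff_profile_scaled_le C a) simp
    also have "\<dots> = ennreal (C\<^sub>K * C * a powr \<alpha> * profile p (a *\<^sub>R x))"
      using \<open>0 \<le> C\<^sub>K\<close> C by (simp add: p_def ennreal_mult[symmetric] less_imp_le[OF profile_pos] mult_ac)
    finally have bound: "(\<integral>\<^sup>+y. ennreal \<bar>second_diff h x y * K x y\<bar> \<partial>lborel)
        \<le> ennreal (C\<^sub>K * C * a powr \<alpha> * profile p (a *\<^sub>R x))" .
    have "\<bar>Lalpha K h x\<bar> \<le> C\<^sub>K * C * a powr \<alpha> * profile p (a *\<^sub>R x)"
    proof (rule abs_Lalpha_le[where u = h and K = K and x = x and C = C\<^sub>K and p = p, OF _ _ _ _ _ _ bound])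
      show "\<bar>h x - h y\<bar> \<le> 1" for y
        using profile_pos[of p "a *\<^sub>R x"] profile_pos[of p "a *\<^sub>R y"]
          profile_le_one[of p "a *\<^sub>R x"] profile_le_one[of p "a *\<^sub>R y"]
        by (simp add: h_def abs_le_iff)
    qed (use K assms C in \<open>simp_all add: symm p_def less_imp_le[OF profile_pos]\<close>)
    also have "\<dots> \<le> (C\<^sub>K * C + 1) * a powr \<alpha> * profile p (a *\<^sub>R x)"
      by (intro mult_right_mono) (simp_all add: less_imp_le[OF profile_pos])
    finally show "\<bar>Lalpha K (\<lambda>z. profile p (a *\<^sub>R z)) x\<bar> \<le> (C\<^sub>K * C + 1) * a powr \<alpha> * profile p (a *\<^sub>R x)"
      by (simp add: h_def[abs_def])
  qed
qed

lemma profile_scaleR: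
  assumes "0 < a"
  shows "profile p (a *\<^sub>R z) = 1 / (1 + a powr p * norm z powr p)"
  using assms by (simp add: profile_def powr_mult)

theorem lemma2p2:
  fixes K :: "real^'n \<Rightarrow> real^'n \<Rightarrow> real"
    and K' :: "(real^'n) \<Rightarrow> (real^'n) \<Rightarrow> ((real^'n) \<Rightarrow>\<^sub>L real)"
    and K'' :: "(real^'n) \<Rightarrow> (real^'n) \<Rightarrow> ((real^'n) \<Rightarrow>\<^sub>L ((real^'n) \<Rightarrow>\<^sub>L real))"
    and \<alpha> C\<^sub>K :: real
  assumes alpha: "0 < \<alpha>" "\<alpha> < 2"
    and pos: "\<And>x y. 0 < K x y"
    and periodic: "\<And>x y z. (\<forall>i. z $ i \<in> \<int>) \<Longrightarrow> K (x + z) y = K x y"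
    and deriv1: "\<And>x y. ((\<lambda>x. K x y) has_derivative blinfun_apply (K' x y)) (at x)"
    and deriv2: "\<And>x y. ((\<lambda>x. K' x y) has_derivative blinfun_apply (K'' x y)) (at x)"
    and cont2: "\<And>y. continuous_on UNIV (\<lambda>x. K'' x y)"
    and symm: "\<And>x y. K x (- y) = K x y"
    and meas: "\<And>x. (\<lambda>y. K x y) \<in> borel_measurable lborel"
    and CK: "0 < C\<^sub>K"
    and Kbound: "\<And>x y. y \<noteq> 0 \<Longrightarrow>
        inverse C\<^sub>K \<le> K x y * norm y powr (real CARD('n) + \<alpha>) \<and>
        K x y * norm y powr (real CARD('n) + \<alpha>) \<le> C\<^sub>K"
    and K'bound: "\<And>x y. y \<noteq> 0 \<Longrightarrow> norm (K' x y) * norm y powr (real CARD('n) + \<alpha>) \<le> C\<^sub>K"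
    and K''bound: "\<And>x y. y \<noteq> 0 \<Longrightarrow> norm (K'' x y) * norm y powr (real CARD('n) + \<alpha>) \<le> C\<^sub>K"
  shows "\<exists>D>0. \<forall>(lam::real) (x::real^'n) (t::real).
     \<bar>Lalpha K (\<lambda>z. 1 / (1 + exp (- lam * t) * norm z powr (real CARD('n) + \<alpha>))) x\<bar>
       \<le> D * exp (- \<alpha> * lam * t / (real CARD('n) + \<alpha>))
           / (1 + exp (- lam * t) * norm x powr (real CARD('n) + \<alpha>))"
proof -
  define p where "p = real CARD('n) + \<alpha>"
  have K_le: "K x y \<le> C\<^sub>K * norm y powr (- (DIM(real^'n) + \<alpha>))" if "y \<noteq> 0" for x y :: "real^'n"
  proof -
    have "K x y * norm y powr p \<le> C\<^sub>K" using Kbound[OF that, of x] by (simp add: p_def)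
    then have "K x y \<le> C\<^sub>K / norm y powr p" using that by (simp add: field_simps)
    also have "\<dots> = C\<^sub>K * norm y powr (- p)" by (simp add: powr_minus_divide divide_inverse)
    finally show ?thesis by (simp add: p_def)
  qed
  obtain D where D: "0 < D"
    "\<And>a x::real^'n. 0 < a \<Longrightarrow> \<bar>Lalpha K (\<lambda>z. profile p (a *\<^sub>R z)) x\<bar> \<le> D * a powr \<alpha> * profile p (a *\<^sub>R x)"
    using abs_Lalpha_profile_scaled_le[of \<alpha> K C\<^sub>K] alpha meas symm pos K_le CK
    unfolding p_def by (auto simp: less_imp_le)
  have "\<bar>Lalpha K (\<lambda>z. 1 / (1 + exp (- lam * t) * norm z powr p)) x\<bar>
      \<le> D * exp (- \<alpha> * lam * t / p) / (1 + exp (- lam * t) * norm x powr p)" for lam t and x :: "real^'n"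
  proof -
    define a where "a = exp (- lam * t / p)"
    have p: "0 < p" using alpha by (simp add: p_def)
    have "a powr p = exp (- lam * t)" "a powr \<alpha> = exp (- \<alpha> * lam * t / p)"
      using p by (simp_all add: a_def powr_def)
    then show ?thesis
      using D(2)[of a x] by (simp add: a_def profile_scaleR)
  qed
  with D(1) show ?thesis unfolding p_def by blast
qed

end
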